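(* Let $X,Y$ be $L$-topological spaces and $f:X\to Y$ a continuous map. Then $f$ is a quasihomeomorphism if and only if the map ${\rm pt}_L\mathcal O(f):{\rm pt}_L\mathcal O(X)\to{\rm pt}_L\mathcal O(Y)$, $p\mapsto p\circ f^\leftarrow$, is a homeomorphism (with respect to the spectral $L$-topologies).
   Context: $L$ is a frame. $L$-subsets of $X$ are maps $X\to L$; $a_X$ constant. An $L$-topology on $X$ is $\mathcal O(X)\subseteq L^X$ closed under finite meets and arbitrary joins containing all constants; $f$ continuous if $f^\leftarrow(B)=B\circ f$ is open for every open $B$; here $f^\leftarrow$ is regarded as a map $\mathcal O(Y)\to\mathcal O(X)$. $f$ is a quasihomeomorphism if $f^\leftarrow:\mathcal O(Y)\to\mathcal O(X)$ is a bijection. A point of $\mathcal O(X)$ is $p:\mathcal O(X)\to L$ preserving binary meets and arbitrary joins with $p(\lambda_X)=\lambda$ for all $\lambda\in L$; ${\rm pt}_L\mathcal O(X)$ is the set of points, carrying the spectral $L$-topology $\{\phi(A):A\in\mathcal O(X)\}$ with $\phi(A)(p)=p(A)$. A homeomorphism is a bijection that is continuous with continuous inverse. *)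

theory Defs
  imports "HOL-Library.FuncSet"
begin

class frame = complete_lattice +
  assumes inf_Sup_frame: "inf a (Sup S) = (SUP b\<in>S. inf a b)"

text \<open>L-subsets of a carrier X are (extensional) maps X \<rightarrow> L.\<close>

definition Lconst :: "'a set \<Rightarrow> 'l \<Rightarrow> ('a \<Rightarrow> 'l)" where
  "Lconst X c = restrict (\<lambda>_. c) X"

definition Lmeet :: "'a set \<Rightarrow> ('a \<Rightarrow> 'l::frame) \<Rightarrow> ('a \<Rightarrow> 'l) \<Rightarrow> ('a \<Rightarrow> 'l)" where
  "Lmeet X A B = restrict (\<lambda>x. inf (A x) (B x)) X"

definition Ljoin :: "'a set \<Rightarrow> ('a \<Rightarrow> 'l::frame) set \<Rightarrow> ('a \<Rightarrow> 'l)" where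
  "Ljoin X S = restrict (\<lambda>x. SUP A\<in>S. A x) X"

definition Ltopology :: "'a set \<Rightarrow> ('a \<Rightarrow> 'l::frame) set \<Rightarrow> bool" where
  "Ltopology X T \<longleftrightarrow>
     T \<subseteq> extensional X \<and>
     (\<forall>c. Lconst X c \<in> T) \<and>
     (\<forall>A\<in>T. \<forall>B\<in>T. Lmeet X A B \<in> T) \<and>
     (\<forall>S. S \<subseteq> T \<longrightarrow> Ljoin X S \<in> T)"

definition Lpreimage :: "'a set \<Rightarrow> ('a \<Rightarrow> 'b) \<Rightarrow> ('b \<Rightarrow> 'l) \<Rightarrow> ('a \<Rightarrow> 'l)" where
  "Lpreimage X f B = restrict (B \<circ> f) X"

definition Lcontinuous ::
  "'a set \<Rightarrow> ('a \<Rightarrow> 'l::frame) set \<Rightarrow> 'b set \<Rightarrow> ('b \<Rightarrow> 'l) set \<Rightarrow> ('a \<Rightarrow> 'b) \<Rightarrow> bool" where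
  "Lcontinuous X OX Y OY f \<longleftrightarrow> f \<in> X \<rightarrow> Y \<and> (\<forall>B\<in>OY. Lpreimage X f B \<in> OX)"

definition Lquasihomeomorphism ::
  "'a set \<Rightarrow> ('a \<Rightarrow> 'l::frame) set \<Rightarrow> 'b set \<Rightarrow> ('b \<Rightarrow> 'l) set \<Rightarrow> ('a \<Rightarrow> 'b) \<Rightarrow> bool" where
  "Lquasihomeomorphism X OX Y OY f \<longleftrightarrow> bij_betw (Lpreimage X f) OY OX"

definition Lhomeomorphism ::
  "'a set \<Rightarrow> ('a \<Rightarrow> 'l::frame) set \<Rightarrow> 'b set \<Rightarrow> ('b \<Rightarrow> 'l) set \<Rightarrow> ('a \<Rightarrow> 'b) \<Rightarrow> bool" where
  "Lhomeomorphism X OX Y OY f \<longleftrightarrow>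
     bij_betw f X Y \<and> Lcontinuous X OX Y OY f \<and>
     Lcontinuous Y OY X OX (the_inv_into X f)"

definition Lpoints :: "'a set \<Rightarrow> ('a \<Rightarrow> 'l::frame) set \<Rightarrow> (('a \<Rightarrow> 'l) \<Rightarrow> 'l) set" where
  "Lpoints X T = {p. p \<in> extensional T \<and>
     (\<forall>A\<in>T. \<forall>B\<in>T. p (Lmeet X A B) = inf (p A) (p B)) \<and>
     (\<forall>S. S \<subseteq> T \<longrightarrow> p (Ljoin X S) = (SUP A\<in>S. p A)) \<and>
     (\<forall>c. p (Lconst X c) = c)}"

definition Lphi :: "'a set \<Rightarrow> ('a \<Rightarrow> 'l::frame) set \<Rightarrow> ('a \<Rightarrow> 'l) \<Rightarrow> ((('a \<Rightarrow> 'l) \<Rightarrow> 'l) \<Rightarrow> 'l)" where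
  "Lphi X T A = restrict (\<lambda>p. p A) (Lpoints X T)"

definition Lspectral :: "'a set \<Rightarrow> ('a \<Rightarrow> 'l::frame) set \<Rightarrow> ((('a \<Rightarrow> 'l) \<Rightarrow> 'l) \<Rightarrow> 'l) set" where
  "Lspectral X T = Lphi X T ` T"

definition Lptmap :: "'a set \<Rightarrow> ('b \<Rightarrow> 'l) set \<Rightarrow> ('a \<Rightarrow> 'b) \<Rightarrow> (('a \<Rightarrow> 'l) \<Rightarrow> 'l) \<Rightarrow> (('b \<Rightarrow> 'l) \<Rightarrow> 'l)" where
  "Lptmap X OY f p = restrict (\<lambda>B. p (Lpreimage X f B)) OY"

end

theory Submission
  imports Defs
begin

text \<open>
  A frame homomorphism \<open>h : \<O>(Y) \<rightarrow> \<O>(X)\<close> induces \<open>p \<mapsto> p \<circ> h\<close> from \<open>pt\<^sub>L \<O>(X)\<close>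
  to \<open>pt\<^sub>L \<O>(Y)\<close>; it pulls \<open>\<phi>\<^sub>Y(B)\<close> back to \<open>\<phi>\<^sub>X(h B)\<close>, so it is continuous, and the
  construction is functorial. Hence if \<open>f\<^sup>\<leftarrow>\<close> is bijective, it is a frame isomorphism and
  \<open>pt\<^sub>L \<O>(f)\<close> is a homeomorphism, with inverse induced by the inverse isomorphism.
  Conversely, \<open>\<phi>\<close> maps the opens bijectively onto the spectral opens, because the
  evaluation points \<open>A \<mapsto> A(x)\<close> separate opens. A homeomorphism induces a bijection of
  opens, and \<open>\<phi>\<^sub>X \<circ> f\<^sup>\<leftarrow> = pt\<^sub>L \<O>(f)\<^sup>\<leftarrow> \<circ> \<phi>\<^sub>Y\<close>, so \<open>f\<^sup>\<leftarrow>\<close> is bijective as well.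
\<close>

lemma Lpreimage_Lmeet:
  assumes "f \<in> X \<rightarrow> Y"
  shows "Lpreimage X f (Lmeet Y A B) = Lmeet X (Lpreimage X f A) (Lpreimage X f B)"
  using assms by (auto simp: Lpreimage_def Lmeet_def fun_eq_iff)

lemma Lpreimage_Ljoin:
  assumes "f \<in> X \<rightarrow> Y"
  shows "Lpreimage X f (Ljoin Y S) = Ljoin X (Lpreimage X f ` S)"
proof -
  have "(SUP A\<in>Lpreimage X f ` S. A x) = (SUP B\<in>S. B (f x))" if "x \<in> X" for x
    using that by (simp add: image_comp Lpreimage_def comp_def)
  then show ?thesis
    using assms by (auto simp: Lpreimage_def Ljoin_def fun_eq_iff)
qed

lemma Lpreimage_Lconst:
  assumes "f \<in> X \<rightarrow> Y"
  shows "Lpreimage X f (Lconst Y c) = Lconst X c"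
  using assms by (auto simp: Lpreimage_def Lconst_def fun_eq_iff)

lemma Lcontinuous_cong:
  assumes "\<And>x. x \<in> X \<Longrightarrow> f x = g x"
  shows "Lcontinuous X OX Y OY f \<longleftrightarrow> Lcontinuous X OX Y OY g"
  unfolding Lcontinuous_def Lpreimage_def using assms
  by (simp add: Pi_iff cong: restrict_cong)

lemma Lhomeomorphism_byWitness:
  assumes f: "Lcontinuous X OX Y OY f" and g: "Lcontinuous Y OY X OX g"
    and g_f: "\<And>x. x \<in> X \<Longrightarrow> g (f x) = x" and f_g: "\<And>y. y \<in> Y \<Longrightarrow> f (g y) = y"
  shows "Lhomeomorphism X OX Y OY f"
proof -
  have "f \<in> X \<rightarrow> Y" and "g \<in> Y \<rightarrow> X"
    using f g by (simp_all add: Lcontinuous_def)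
  then have bij: "bij_betw f X Y"
    using g_f f_g by (intro bij_betw_byWitness[where f' = g]) auto
  have "the_inv_into X f y = g y" if "y \<in> Y" for y
    using that bij g f_g by (intro the_inv_into_f_eq) (auto simp: bij_betw_def Lcontinuous_def)
  then show ?thesis
    using bij f g Lcontinuous_cong[of Y "the_inv_into X f" g OY X OX]
    by (simp add: Lhomeomorphism_def)
qed

lemma Lhomeomorphism_imp_Lquasihomeomorphism:
  assumes OX: "OX \<subseteq> extensional X" and OY: "OY \<subseteq> extensional Y"
    and "Lhomeomorphism X OX Y OY k"
  shows "Lquasihomeomorphism X OX Y OY k"
proof -
  let ?k' = "the_inv_into X k"
  have bij: "bij_betw k X Y" and k: "Lcontinuous X OX Y OY k" and k': "Lcontinuous Y OY X OX ?k'"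
    using assms(3) by (auto simp: Lhomeomorphism_def)
  have "Lpreimage Y ?k' (Lpreimage X k B) = B" if "B \<in> OY" for B
  proof (rule extensionalityI)
    show "Lpreimage Y ?k' (Lpreimage X k B) \<in> extensional Y" "B \<in> extensional Y"
      using that OY by (auto simp: Lpreimage_def)
    fix y assume "y \<in> Y"
    then show "Lpreimage Y ?k' (Lpreimage X k B) y = B y"
      using bij by (simp add: Lpreimage_def bij_betw_def the_inv_into_into f_the_inv_into_f)
  qed
  moreover have "Lpreimage X k (Lpreimage Y ?k' A) = A" if "A \<in> OX" for A
  proof (rule extensionalityI)
    show "Lpreimage X k (Lpreimage Y ?k' A) \<in> extensional X" "A \<in> extensional X"
      using that OX by (auto simp: Lpreimage_def)
    fix x assume "x \<in> X"
    then show "Lpreimage X k (Lpreimage Y ?k' A) x = A x"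
      using bij by (auto simp: Lpreimage_def bij_betw_def the_inv_into_f_f)
  qed
  moreover have "Lpreimage X k ` OY \<subseteq> OX" and "Lpreimage Y ?k' ` OX \<subseteq> OY"
    using k k' by (auto simp: Lcontinuous_def)
  ultimately show ?thesis
    unfolding Lquasihomeomorphism_def by (blast intro: bij_betw_byWitness)
qed

lemma Lpoints_evaluation:
  assumes "x \<in> X" and "Ltopology X T"
  shows "restrict (\<lambda>A. A x) T \<in> Lpoints X T"
proof -
  have "(SUP A\<in>S. restrict (\<lambda>A. A x) T A) = (SUP A\<in>S. A x)" if "S \<subseteq> T" for S
    using that by (intro SUP_cong) auto
  then show ?thesis
    using assms by (auto simp: Lpoints_def Ltopology_def Lmeet_def Ljoin_def Lconst_def)
qed

lemma bij_betw_Lphi: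
  assumes T: "Ltopology X T"
  shows "bij_betw (Lphi X T) T (Lspectral X T)"
proof -
  have "A = B" if "A \<in> T" "B \<in> T" and eq: "Lphi X T A = Lphi X T B" for A B
  proof (rule extensionalityI)
    show "A \<in> extensional X" "B \<in> extensional X"
      using that T by (auto simp: Ltopology_def)
    fix x assume "x \<in> X"
    then have ev: "restrict (\<lambda>A. A x) T \<in> Lpoints X T"
      using T by (rule Lpoints_evaluation)
    have "Lphi X T A (restrict (\<lambda>A. A x) T) = Lphi X T B (restrict (\<lambda>A. A x) T)"
      using eq by simp
    then show "A x = B x"
      using ev that by (simp add: Lphi_def)
  qed
  then show ?thesis
    by (auto simp: bij_betw_def inj_on_def Lspectral_def)
qed

definition Lframe_hom ::
  "'a set \<Rightarrow> ('a \<Rightarrow> 'l::frame) set \<Rightarrow> 'b set \<Rightarrow> ('b \<Rightarrow> 'l) set \<Rightarrow> (('b \<Rightarrow> 'l) \<Rightarrow> ('a \<Rightarrow> 'l)) \<Rightarrow> bool"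
  where
  "Lframe_hom X OX Y OY h \<longleftrightarrow> h \<in> OY \<rightarrow> OX \<and>
     (\<forall>A\<in>OY. \<forall>B\<in>OY. h (Lmeet Y A B) = Lmeet X (h A) (h B)) \<and>
     (\<forall>S. S \<subseteq> OY \<longrightarrow> h (Ljoin Y S) = Ljoin X (h ` S)) \<and>
     (\<forall>c. h (Lconst Y c) = Lconst X c)"

lemma Lframe_hom_Lpreimage:
  assumes "Lcontinuous X OX Y OY f"
  shows "Lframe_hom X OX Y OY (Lpreimage X f)"
  using assms
  by (auto simp: Lframe_hom_def Lcontinuous_def Lpreimage_Lmeet Lpreimage_Ljoin Lpreimage_Lconst)

lemma Lframe_hom_the_inv_into:
  assumes TY: "Ltopology Y OY" and h: "Lframe_hom X OX Y OY h" and bij: "bij_betw h OY OX"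
  shows "Lframe_hom Y OY X OX (the_inv_into OY h)"
proof -
  let ?g = "the_inv_into OY h"
  have inj: "inj_on h OY"
    using bij by (simp add: bij_betw_def)
  have g_in: "?g A \<in> OY" and h_g: "h (?g A) = A" if "A \<in> OX" for A
    using that bij by (auto simp: bij_betw_def the_inv_into_into f_the_inv_into_f)
  have g_eqI: "?g A = B" if "h B = A" "B \<in> OY" for A B
    using the_inv_into_f_eq[OF inj that] .
  have "?g (Lmeet X A B) = Lmeet Y (?g A) (?g B)" if "A \<in> OX" "B \<in> OX" for A B
    using that TY h g_in h_g by (intro g_eqI) (simp_all add: Lframe_hom_def Ltopology_def)
  moreover have "?g (Ljoin X S) = Ljoin Y (?g ` S)" if "S \<subseteq> OX" for S
  proof (rule g_eqI)
    have gS: "?g ` S \<subseteq> OY"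
      using that g_in by auto
    have "h ` ?g ` S = S"
      using that h_g by (force simp: image_comp)
    then show "h (Ljoin Y (?g ` S)) = Ljoin X S"
      using gS h by (simp add: Lframe_hom_def)
    show "Ljoin Y (?g ` S) \<in> OY"
      using gS TY by (simp add: Ltopology_def)
  qed
  moreover have "?g (Lconst X c) = Lconst Y c" for c
    using TY h by (intro g_eqI) (simp_all add: Lframe_hom_def Ltopology_def)
  ultimately show ?thesis
    using g_in by (simp add: Lframe_hom_def)
qed

definition Lpt ::
  "('b \<Rightarrow> 'l) set \<Rightarrow> (('b \<Rightarrow> 'l) \<Rightarrow> ('a \<Rightarrow> 'l)) \<Rightarrow> (('a \<Rightarrow> 'l) \<Rightarrow> 'l) \<Rightarrow> (('b \<Rightarrow> 'l) \<Rightarrow> 'l)"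
  where "Lpt OY h p = restrict (p \<circ> h) OY"

lemma Lptmap_eq_Lpt: "Lptmap X OY f = Lpt OY (Lpreimage X f)"
  by (simp add: fun_eq_iff Lptmap_def Lpt_def)

lemma Lpt_in_Lpoints:
  assumes TY: "Ltopology Y OY" and h: "Lframe_hom X OX Y OY h" and p: "p \<in> Lpoints X OX"
  shows "Lpt OY h p \<in> Lpoints Y OY"
proof -
  let ?q = "Lpt OY h p"
  have q: "?q B = p (h B)" if "B \<in> OY" for B
    using that by (simp add: Lpt_def)
  have h_in: "h B \<in> OX" if "B \<in> OY" for B
    using that h by (auto simp: Lframe_hom_def)
  have "?q (Lmeet Y A B) = inf (?q A) (?q B)" if "A \<in> OY" "B \<in> OY" for A B
    using that TY h p h_in by (simp add: q Ltopology_def Lframe_hom_def Lpoints_def)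
  moreover have "?q (Ljoin Y S) = (SUP B\<in>S. ?q B)" if S: "S \<subseteq> OY" for S
  proof -
    have "h ` S \<subseteq> OX"
      using S h_in by auto
    have "?q (Ljoin Y S) = p (Ljoin X (h ` S))"
      using S TY h by (simp add: q Ltopology_def Lframe_hom_def)
    also have "\<dots> = (SUP A\<in>h ` S. p A)"
      using \<open>h ` S \<subseteq> OX\<close> p by (simp add: Lpoints_def)
    also have "\<dots> = (SUP B\<in>S. ?q B)"
      using S by (auto simp: image_comp q intro!: SUP_cong)
    finally show ?thesis .
  qed
  moreover have "?q (Lconst Y c) = c" for c
    using TY h p by (simp add: q Ltopology_def Lframe_hom_def Lpoints_def)
  ultimately show ?thesis
    by (simp add: Lpoints_def Lpt_def)
qed

lemma Lpreimage_Lpt_Lphi: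
  assumes TY: "Ltopology Y OY" and h: "Lframe_hom X OX Y OY h" and "B \<in> OY"
  shows "Lpreimage (Lpoints X OX) (Lpt OY h) (Lphi Y OY B) = Lphi X OX (h B)"
  using assms Lpt_in_Lpoints[OF TY h] by (auto simp: Lpreimage_def Lphi_def Lpt_def fun_eq_iff)

lemma Lcontinuous_Lpt:
  assumes TY: "Ltopology Y OY" and h: "Lframe_hom X OX Y OY h"
  shows "Lcontinuous (Lpoints X OX) (Lspectral X OX) (Lpoints Y OY) (Lspectral Y OY) (Lpt OY h)"
  using h Lpt_in_Lpoints[OF TY h] Lpreimage_Lpt_Lphi[OF TY h]
  by (auto simp: Lcontinuous_def Lspectral_def Lframe_hom_def)

lemma Lpt_Lpt_cancel:
  assumes "g \<in> OX \<rightarrow> OY" and "\<And>A. A \<in> OX \<Longrightarrow> h (g A) = A" and "p \<in> extensional OX"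
  shows "Lpt OX g (Lpt OY h p) = p"
  unfolding Lpt_def using assms by (intro ext) (auto simp: extensional_def)

lemma Lhomeomorphism_Lpt_iff:
  assumes TX: "Ltopology X OX" and TY: "Ltopology Y OY" and h: "Lframe_hom X OX Y OY h"
  shows "Lhomeomorphism (Lpoints X OX) (Lspectral X OX) (Lpoints Y OY) (Lspectral Y OY) (Lpt OY h)
    \<longleftrightarrow> bij_betw h OY OX"
proof
  assume homeo: "Lhomeomorphism (Lpoints X OX) (Lspectral X OX) (Lpoints Y OY) (Lspectral Y OY) (Lpt OY h)"
  have "Lspectral X OX \<subseteq> extensional (Lpoints X OX)"
    and "Lspectral Y OY \<subseteq> extensional (Lpoints Y OY)"
    by (auto simp: Lspectral_def Lphi_def)
  then have "Lquasihomeomorphism (Lpoints X OX) (Lspectral X OX) (Lpoints Y OY) (Lspectral Y OY) (Lpt OY h)"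
    by (rule Lhomeomorphism_imp_Lquasihomeomorphism[OF _ _ homeo])
  then have "bij_betw (Lpreimage (Lpoints X OX) (Lpt OY h) \<circ> Lphi Y OY) OY (Lspectral X OX)"
    unfolding Lquasihomeomorphism_def by (rule bij_betw_trans[OF bij_betw_Lphi[OF TY]])
  moreover have "bij_betw (Lphi X OX \<circ> h) OY (Lspectral X OX) \<longleftrightarrow>
      bij_betw (Lpreimage (Lpoints X OX) (Lpt OY h) \<circ> Lphi Y OY) OY (Lspectral X OX)"
    by (rule bij_betw_cong) (simp add: Lpreimage_Lpt_Lphi[OF TY h])
  moreover have "h ` OY \<subseteq> OX"
    using h by (auto simp: Lframe_hom_def)
  ultimately show "bij_betw h OY OX"
    using bij_betw_comp_iff2[OF bij_betw_Lphi[OF TX]] by blast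
next
  assume bij: "bij_betw h OY OX"
  let ?g = "the_inv_into OY h"
  have g: "Lframe_hom Y OY X OX ?g"
    using Lframe_hom_the_inv_into[OF TY h bij] .
  have "Lpt OX ?g (Lpt OY h p) = p" if "p \<in> Lpoints X OX" for p
    using that g bij by (intro Lpt_Lpt_cancel)
      (auto simp: Lframe_hom_def Lpoints_def f_the_inv_into_f_bij_betw)
  moreover have "Lpt OY h (Lpt OX ?g q) = q" if "q \<in> Lpoints Y OY" for q
    using that h bij by (intro Lpt_Lpt_cancel)
      (auto simp: Lframe_hom_def Lpoints_def bij_betw_def the_inv_into_f_f)
  ultimately show "Lhomeomorphism (Lpoints X OX) (Lspectral X OX) (Lpoints Y OY) (Lspectral Y OY) (Lpt OY h)"
    by (rule Lhomeomorphism_byWitness[OF Lcontinuous_Lpt[OF TY h] Lcontinuous_Lpt[OF TX g]])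
qed

theorem proposition3p11:
  fixes X :: "'a set" and OX :: "('a \<Rightarrow> 'l::frame) set"
    and Y :: "'b set" and OY :: "('b \<Rightarrow> 'l) set" and f :: "'a \<Rightarrow> 'b"
  assumes "Ltopology X OX" and "Ltopology Y OY"
    and "Lcontinuous X OX Y OY f"
  shows "Lquasihomeomorphism X OX Y OY f \<longleftrightarrow>
         Lhomeomorphism (Lpoints X OX) (Lspectral X OX) (Lpoints Y OY) (Lspectral Y OY)
           (Lptmap X OY f)"
  using Lhomeomorphism_Lpt_iff[OF assms(1,2) Lframe_hom_Lpreimage[OF assms(3)]]
  by (simp add: Lquasihomeomorphism_def Lptmap_eq_Lpt)

end
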